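(* Let $p\in(0,1]$ and let $q\ge1$ be an integer. Then $\gamma_\infty^*\ge\big(1-(1-p)^q\big)\gamma_{\infty,q}^*$.
   Context: For an integer $q\ge1$, $\gamma_{\infty,q}^*$ is the optimal value (supremum) of $(CLP)_{p,q}$: maximize $\gamma$ over $\gamma\ge0$ and measurable $\alpha:[0,1]\times\{1,2,\dots\}\to[0,1]$ subject to $t\,\alpha(t,s)\le1-p\int_0^t\sum_{\sigma\ge1}\alpha(\tau,\sigma)\,d\tau$ for all $t\in[0,1],s\ge1$, and $\gamma\le\frac{p}{1-(1-p)^k}\int_0^1\sum_{s\ge1}\alpha(t,s)\sum_{\ell=s}^k\binom{\ell-1}{s-1}t^s(1-t)^{\ell-s}\,dt$ for all $k\in[q]$. $\gamma_\infty^*$ is the optimal value of the same program with the second family of constraints imposed for all $k\ge1$. *)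

theory Defs
  imports "HOL-Analysis.Analysis"
begin

text \<open>Feasibility of alpha in (CLP)_p: alpha is measurable on [0,1] x {1,2,...}, takes values
  in [0,1] there, and satisfies the capacity constraint
  t * alpha(t,s) <= 1 - p * int_0^t sum_{sigma>=1} alpha(tau,sigma) dtau
  for all t in [0,1], s >= 1. The (possibly infinite) integral of the series is taken as a
  nonnegative (extended) integral; the constraint is stated with it moved to the left side.\<close>
definition clp_alpha_feasible :: "real \<Rightarrow> (real \<Rightarrow> nat \<Rightarrow> real) \<Rightarrow> bool" where
  "clp_alpha_feasible p \<alpha> \<longleftrightarrow>
     (\<forall>s\<ge>1. (\<lambda>t. \<alpha> t s) \<in> borel_measurable (restrict_space lborel {0..1})) \<and>
     (\<forall>t\<in>{0..1}. \<forall>s\<ge>1. 0 \<le> \<alpha> t s \<and> \<alpha> t s \<le> 1) \<and>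
     (\<forall>t\<in>{0..1}. \<forall>s\<ge>1.
        ennreal (t * \<alpha> t s)
        + ennreal p * (\<integral>\<^sup>+ \<tau>. (\<Sum>\<sigma>. ennreal (\<alpha> \<tau> (Suc \<sigma>))) * indicator {0..t} \<tau> \<partial>lborel)
        \<le> 1)"

text \<open>Terms with s > k vanish (empty inner sum), so the outer sum runs over s in {1..k}.\<close>
definition clp_obj :: "real \<Rightarrow> (real \<Rightarrow> nat \<Rightarrow> real) \<Rightarrow> nat \<Rightarrow> real" where
  "clp_obj p \<alpha> k = p / (1 - (1 - p) ^ k) *
     (\<integral>t\<in>{0..1}. (\<Sum>s\<in>{1..k}. \<alpha> t s *
        (\<Sum>l\<in>{s..k}. real ((l - 1) choose (s - 1)) * t ^ s * (1 - t) ^ (l - s))) \<partial>lborel)"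

definition gamma_q :: "real \<Rightarrow> nat \<Rightarrow> real" where
  "gamma_q p q = Sup {\<gamma>. 0 \<le> \<gamma> \<and> (\<exists>\<alpha>. clp_alpha_feasible p \<alpha> \<and>
                         (\<forall>k\<in>{1..q}. \<gamma> \<le> clp_obj p \<alpha> k))}"

definition gamma_inf :: "real \<Rightarrow> real" where
  "gamma_inf p = Sup {\<gamma>. 0 \<le> \<gamma> \<and> (\<exists>\<alpha>. clp_alpha_feasible p \<alpha> \<and>
                         (\<forall>k\<ge>1. \<gamma> \<le> clp_obj p \<alpha> k))}"

end

theory Submission imports Defs begin

text \<open>Truncating the objective at q instead of k \<ge> q only drops nonnegative terms of the
  integrand, so p times the q-th integral is at most p times the k-th one. The normalising
  factor p / (1 - (1 - p)^k) is at least p, and equals p / c for c = 1 - (1 - p)^q when k = q.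
  Hence scaling any solution value of (CLP)_{p,q} by c gives a solution value of the full
  program, and the inequality passes to the suprema; these are genuine suprema because the
  values of the full program are bounded by its k = 1 objective, which is at most 1.\<close>

definition clp_weight :: "nat \<Rightarrow> nat \<Rightarrow> real \<Rightarrow> real" where
  "clp_weight k s t = (\<Sum>l\<in>{s..k}. real ((l - 1) choose (s - 1)) * t ^ s * (1 - t) ^ (l - s))"

definition clp_integrand :: "(real \<Rightarrow> nat \<Rightarrow> real) \<Rightarrow> nat \<Rightarrow> real \<Rightarrow> real" where
  "clp_integrand \<alpha> k t = (\<Sum>s\<in>{1..k}. \<alpha> t s * clp_weight k s t)"

lemma clp_obj_eq_integral:
  "clp_obj p \<alpha> k = p / (1 - (1 - p) ^ k) * (LINT t:{0..1}|lborel. clp_integrand \<alpha> k t)"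
  unfolding clp_obj_def clp_integrand_def clp_weight_def ..

lemma clp_weight_nonneg: "0 \<le> t \<Longrightarrow> t \<le> 1 \<Longrightarrow> 0 \<le> clp_weight k s t"
  unfolding clp_weight_def by (intro sum_nonneg) auto

lemma clp_weight_le:
  assumes "0 \<le> t" "t \<le> 1"
  shows "clp_weight k s t \<le> (\<Sum>l\<in>{s..k}. real ((l - 1) choose (s - 1)))"
  unfolding clp_weight_def
proof (rule sum_mono)
  fix l
  have "t ^ s * (1 - t) ^ (l - s) \<le> 1"
    using assms by (intro mult_le_one power_le_one) auto
  then show "real ((l - 1) choose (s - 1)) * t ^ s * (1 - t) ^ (l - s)
      \<le> real ((l - 1) choose (s - 1))"
    by (metis mult.assoc mult_left_le of_nat_0_le_iff)
qed

lemma clp_weight_mono: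
  "0 \<le> t \<Longrightarrow> t \<le> 1 \<Longrightarrow> q \<le> k \<Longrightarrow> clp_weight q s t \<le> clp_weight k s t"
  unfolding clp_weight_def by (intro sum_mono2) auto

lemma clp_integrand_nonneg:
  assumes "0 \<le> t" "t \<le> 1" "\<And>s. 1 \<le> s \<Longrightarrow> 0 \<le> \<alpha> t s"
  shows "0 \<le> clp_integrand \<alpha> k t"
  unfolding clp_integrand_def using assms by (intro sum_nonneg mult_nonneg_nonneg clp_weight_nonneg) auto

lemma clp_integrand_le:
  assumes "0 \<le> t" "t \<le> 1" "\<And>s. 1 \<le> s \<Longrightarrow> 0 \<le> \<alpha> t s \<and> \<alpha> t s \<le> 1"
  shows "clp_integrand \<alpha> k t \<le> (\<Sum>s\<in>{1..k}. \<Sum>l\<in>{s..k}. real ((l - 1) choose (s - 1)))"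
  unfolding clp_integrand_def
proof (rule sum_mono)
  fix s assume "s \<in> {1..k}"
  then have "0 \<le> \<alpha> t s" "\<alpha> t s \<le> 1" using assms(3) by auto
  then have "\<alpha> t s * clp_weight k s t \<le> 1 * clp_weight k s t"
    using assms by (intro mult_right_mono clp_weight_nonneg)
  also have "\<dots> \<le> (\<Sum>l\<in>{s..k}. real ((l - 1) choose (s - 1)))"
    using assms clp_weight_le by simp
  finally show "\<alpha> t s * clp_weight k s t \<le> (\<Sum>l\<in>{s..k}. real ((l - 1) choose (s - 1)))" .
qed

lemma clp_integrand_mono:
  assumes "0 \<le> t" "t \<le> 1" "\<And>s. 1 \<le> s \<Longrightarrow> 0 \<le> \<alpha> t s" "q \<le> k"
  shows "clp_integrand \<alpha> q t \<le> clp_integrand \<alpha> k t"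
proof -
  have "clp_integrand \<alpha> q t \<le> (\<Sum>s\<in>{1..q}. \<alpha> t s * clp_weight k s t)"
    unfolding clp_integrand_def using assms
    by (intro sum_mono mult_left_mono clp_weight_mono) auto
  also have "\<dots> \<le> clp_integrand \<alpha> k t"
    unfolding clp_integrand_def using assms
    by (intro sum_mono2 mult_nonneg_nonneg clp_weight_nonneg) auto
  finally show ?thesis .
qed

lemma clp_alpha_feasible_bounds:
  "clp_alpha_feasible p \<alpha> \<Longrightarrow> t \<in> {0..1} \<Longrightarrow> 1 \<le> s \<Longrightarrow> 0 \<le> \<alpha> t s \<and> \<alpha> t s \<le> 1"
  unfolding clp_alpha_feasible_def by blast

lemma set_integrable_clp_integrand:
  assumes "clp_alpha_feasible p \<alpha>"
  shows "set_integrable lborel {0..1} (clp_integrand \<alpha> k)"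
proof -
  let ?M = "restrict_space lborel {0..1::real}"
  have alpha_measurable: "(\<lambda>t. \<alpha> t s) \<in> borel_measurable ?M" if "1 \<le> s" for s
    using assms that unfolding clp_alpha_feasible_def by blast
  have "finite_measure ?M"
    by (intro finite_measureI) (simp add: space_restrict_space emeasure_restrict_space)
  moreover have "AE t in ?M. norm (clp_integrand \<alpha> k t)
      \<le> (\<Sum>s\<in>{1..k}. \<Sum>l\<in>{s..k}. real ((l - 1) choose (s - 1)))"
  proof (rule AE_I2)
    fix t assume "t \<in> space ?M"
    then have t: "0 \<le> t" "t \<le> 1" by (auto simp: space_restrict_space)
    then have "\<And>s. 1 \<le> s \<Longrightarrow> 0 \<le> \<alpha> t s \<and> \<alpha> t s \<le> 1"
      using clp_alpha_feasible_bounds[OF assms] by auto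
    then show "norm (clp_integrand \<alpha> k t)
        \<le> (\<Sum>s\<in>{1..k}. \<Sum>l\<in>{s..k}. real ((l - 1) choose (s - 1)))"
      using clp_integrand_nonneg[OF t] clp_integrand_le[OF t] by simp
  qed
  moreover have "clp_integrand \<alpha> k \<in> borel_measurable ?M"
    unfolding clp_integrand_def clp_weight_def
    by (intro borel_measurable_sum borel_measurable_times alpha_measurable
        measurable_restrict_space1) auto
  ultimately have "integrable ?M (clp_integrand \<alpha> k)"
    by (rule finite_measure.integrable_const_bound)
  then show ?thesis
    unfolding set_integrable_def by (subst (asm) integrable_restrict_space) auto
qed

lemma one_minus_power_bounds:
  fixes p :: real
  assumes "0 < p" "p \<le> 1" "1 \<le> k"
  shows "0 < 1 - (1 - p) ^ k" "1 - (1 - p) ^ k \<le> 1"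
proof -
  have "(1 - p) ^ k \<le> (1 - p) ^ 1" using assms by (intro power_decreasing) auto
  then show "0 < 1 - (1 - p) ^ k" using assms by simp
  show "1 - (1 - p) ^ k \<le> 1" using assms by simp
qed

lemma clp_obj_one_le:
  assumes "clp_alpha_feasible p \<alpha>" "0 < p"
  shows "clp_obj p \<alpha> 1 \<le> 1"
proof -
  have "clp_obj p \<alpha> 1 = (LINT t:{0..1}|lborel. clp_integrand \<alpha> 1 t)"
    using assms by (simp add: clp_obj_eq_integral)
  also have "\<dots> \<le> (LINT (t::real):{0..1}|lborel. 1::real)"
  proof (rule set_integral_mono)
    show "set_integrable lborel {0..1::real} (\<lambda>t. 1::real)"
      by (intro borel_integrable_atLeastAtMost') auto
    fix t :: real assume t: "t \<in> {0..1}"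
    have "clp_integrand \<alpha> 1 t = \<alpha> t 1 * t"
      by (simp add: clp_integrand_def clp_weight_def)
    also have "\<dots> \<le> 1 * 1"
      using clp_alpha_feasible_bounds[OF assms(1) t] t by (intro mult_mono) auto
    finally show "clp_integrand \<alpha> 1 t \<le> 1" by simp
  qed (rule set_integrable_clp_integrand[OF assms(1)])
  also have "\<dots> = 1" by (simp add: set_lebesgue_integral_def)
  finally show ?thesis .
qed

lemma clp_obj_truncation_le:
  assumes "clp_alpha_feasible p \<alpha>" "0 < p" "p \<le> 1" "1 \<le> q" "q \<le> k"
  shows "(1 - (1 - p) ^ q) * clp_obj p \<alpha> q \<le> clp_obj p \<alpha> k"
proof -
  define I where "I j = (LINT t:{0..1}|lborel. clp_integrand \<alpha> j t)" for j
  have \<alpha>_nonneg: "0 \<le> \<alpha> t s" if "t \<in> {0..1}" "1 \<le> s" for t s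
    using clp_alpha_feasible_bounds[OF assms(1) that] by simp
  have Iq_le_Ik: "I q \<le> I k"
    unfolding I_def using \<alpha>_nonneg assms(5)
    by (intro set_integral_mono set_integrable_clp_integrand[OF assms(1)])
      (auto intro!: clp_integrand_mono)
  have "0 \<le> I k"
    unfolding I_def set_lebesgue_integral_def
    by (intro Bochner_Integration.integral_nonneg)
      (auto simp: indicator_def intro!: clp_integrand_nonneg \<alpha>_nonneg)
  have "(1 - (1 - p) ^ q) * clp_obj p \<alpha> q = p * I q"
    using one_minus_power_bounds[OF assms(2-4)] by (simp add: clp_obj_eq_integral I_def)
  also have "\<dots> \<le> p * I k" using Iq_le_Ik assms(2) by simp
  also have "\<dots> \<le> p / (1 - (1 - p) ^ k) * I k"
    using one_minus_power_bounds[of p k] assms \<open>0 \<le> I k\<close>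
    by (intro mult_right_mono) (auto simp: le_divide_eq)
  finally show ?thesis by (simp add: clp_obj_eq_integral I_def)
qed

lemma mult_cSup_le_cSup:
  fixes A B :: "real set"
  assumes "A \<noteq> {}" "bdd_above B" "0 < c" "\<And>x. x \<in> A \<Longrightarrow> c * x \<in> B"
  shows "c * Sup A \<le> Sup B"
proof -
  have "Sup A \<le> Sup B / c"
  proof (rule cSup_least[OF assms(1)])
    fix x assume "x \<in> A"
    then have "c * x \<le> Sup B" using assms by (intro cSup_upper) auto
    then show "x \<le> Sup B / c" using assms(3) by (simp add: field_simps)
  qed
  then show ?thesis using assms(3) by (simp add: field_simps)
qed

theorem mainTheorem14:
  fixes p :: real and q :: nat
  assumes "0 < p" and "p \<le> 1" and "1 \<le> q"
  shows "gamma_inf p \<ge> (1 - (1 - p) ^ q) * gamma_q p q"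
proof -
  define c where "c = 1 - (1 - p) ^ q"
  define Sq where "Sq = {\<gamma>. 0 \<le> \<gamma> \<and> (\<exists>\<alpha>. clp_alpha_feasible p \<alpha> \<and> (\<forall>k\<in>{1..q}. \<gamma> \<le> clp_obj p \<alpha> k))}"
  define Sinf where "Sinf = {\<gamma>. 0 \<le> \<gamma> \<and> (\<exists>\<alpha>. clp_alpha_feasible p \<alpha> \<and> (\<forall>k\<ge>1. \<gamma> \<le> clp_obj p \<alpha> k))}"
  have c: "0 < c" "c \<le> 1" using one_minus_power_bounds[OF assms] by (auto simp: c_def)
  have "clp_alpha_feasible p (\<lambda>t s. 0)" "clp_obj p (\<lambda>t s. 0) k = 0" for k
    by (simp_all add: clp_alpha_feasible_def clp_obj_def)
  then have "0 \<in> Sq" unfolding Sq_def by (auto intro!: exI[of _ "\<lambda>t s. 0"])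
  moreover have "bdd_above Sinf"
    unfolding Sinf_def using clp_obj_one_le[OF _ assms(1)] by (intro bdd_aboveI[of _ 1]) force
  moreover have "c * \<gamma> \<in> Sinf" if "\<gamma> \<in> Sq" for \<gamma>
  proof -
    obtain \<alpha> where "0 \<le> \<gamma>" and feasible: "clp_alpha_feasible p \<alpha>"
      and \<gamma>: "\<And>k. k \<in> {1..q} \<Longrightarrow> \<gamma> \<le> clp_obj p \<alpha> k"
      using \<open>\<gamma> \<in> Sq\<close> unfolding Sq_def by blast
    have "c * \<gamma> \<le> clp_obj p \<alpha> k" if "1 \<le> k" for k
    proof (cases "k \<le> q")
      case True
      have "c * \<gamma> \<le> \<gamma>" using c \<open>0 \<le> \<gamma>\<close> by (simp add: mult_left_le_one_le)
      also have "\<dots> \<le> clp_obj p \<alpha> k" using \<gamma> True that by simp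
      finally show ?thesis .
    next
      case False
      have "c * \<gamma> \<le> c * clp_obj p \<alpha> q" using \<gamma>[of q] assms(3) c by simp
      also have "\<dots> \<le> clp_obj p \<alpha> k"
        unfolding c_def using False assms feasible by (intro clp_obj_truncation_le) auto
      finally show ?thesis .
    qed
    then show ?thesis unfolding Sinf_def using feasible \<open>0 \<le> \<gamma>\<close> c by auto
  qed
  ultimately have "c * Sup Sq \<le> Sup Sinf"
    using c by (intro mult_cSup_le_cSup) auto
  then show ?thesis unfolding gamma_inf_def gamma_q_def Sq_def Sinf_def c_def .
qed

end
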